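(* Let $\Phi:\mathbf D\to\mathbf C$, $\Psi:\mathbf C\to\mathbf D$ be a deformation retract of finite-type based chain complexes $(\mathbf C,I)$, $(\mathbf D,I')$ of real inner product spaces, and fix $n$. Then the conditions (1) $\mathrm{Proj}_{\operatorname{Ker}\partial_{n+1}^\dagger}(\Phi\Psi s-s)=0$ for all $s\in\mathbf C_n$, and (2) $\mathrm{Proj}_{\operatorname{Ker}\partial_{n-1}}(\Psi^\dagger\Phi^\dagger s-s)=0$ for all $s\in\mathbf C_{n-1}$ hold if and only if the Morsification $\mathcal M$ associated to $(\Phi,\Psi)$ is $(n,n-1)$-free.
   Context: $\partial$ is the boundary of $\mathbf C$, $\dagger$ the adjoint with respect to the inner products, $\mathrm{Proj}_W$ orthogonal projection. Deformation retract: chain maps with $\Psi\Phi=\mathrm{id}_{\mathbf D}$ and $\Phi\Psi$ chain homotopic to $\mathrm{id}_{\mathbf C}$. Then $\mathbf C=\operatorname{Ker}\Psi\oplus\operatorname{Im}\Phi$ as chain complexes. Morsification: give the subcomplex $\operatorname{Ker}\Psi$ (boundary $\partial'$) the restricted inner product and choose in each degree, via singular value decompositions, orthonormal bases $\mathcal R_+(\partial'_m)$ of $\operatorname{Im}\partial_m'^\dagger$ and $\mathcal L_+(\partial'_m)$ of $\operatorname{Im}\partial'_m$ with a bijection $v\mapsto w$, $\partial'_mv=\sigma w$, $\sigma>0$, plus a basis of the kernel of its Laplacian; base $\mathbf C$ by these one-dimensional spans together with summands of $\operatorname{Im}\Phi$; the Morse matching $\mathcal M$ consists of the edges $v\to w$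 (pairing $v\in\mathbf C_m$ with $w\in\mathbf C_{m-1}$), and cells of $\operatorname{Im}\Phi$ are critical. $\mathcal M$ is $(n,n-1)$-free if it pairs no $n$-cell with an $(n-1)$-cell, i.e. $\mathcal R_+(\partial'_n)=\emptyset$. *)

theory Defs
  imports "HOL-Analysis.Analysis"
begin

text \<open>A finite-type chain complex of real inner product spaces, realised inside a
Euclidean space: degree m piece C m is a subspace, pieces of different degree are
mutually orthogonal (so the total space is their orthogonal direct sum), only finitely
many degrees are nonzero, and d m : C m \<rightarrow> C (m-1) is linear with d d = 0.\<close>

definition chain_cx :: "(int \<Rightarrow> 'a::euclidean_space set) \<Rightarrow> (int \<Rightarrow> 'a \<Rightarrow> 'a) \<Rightarrow> bool" where
  "chain_cx C d \<longleftrightarrow>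
     (\<forall>m. subspace (C m)) \<and>
     (\<forall>m k. m \<noteq> k \<longrightarrow> (\<forall>x\<in>C m. \<forall>y\<in>C k. x \<bullet> y = 0)) \<and>
     finite {m. C m \<noteq> {0}} \<and>
     (\<forall>m. linear (d m)) \<and>
     (\<forall>m. d m ` C m \<subseteq> C (m - 1)) \<and>
     (\<forall>m. \<forall>x\<in>C m. d (m - 1) (d m x) = 0)"

definition chain_map ::
  "(int \<Rightarrow> 'a::euclidean_space set) \<Rightarrow> (int \<Rightarrow> 'a \<Rightarrow> 'a) \<Rightarrow>
   (int \<Rightarrow> 'b::euclidean_space set) \<Rightarrow> (int \<Rightarrow> 'b \<Rightarrow> 'b) \<Rightarrow> (int \<Rightarrow> 'a \<Rightarrow> 'b) \<Rightarrow> bool" where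
  "chain_map C dC D dD f \<longleftrightarrow>
     (\<forall>m. linear (f m) \<and> f m ` C m \<subseteq> D m \<and>
          (\<forall>x\<in>C m. f (m - 1) (dC m x) = dD m (f m x)))"

definition deformation_retract ::
  "(int \<Rightarrow> 'a::euclidean_space set) \<Rightarrow> (int \<Rightarrow> 'a \<Rightarrow> 'a) \<Rightarrow>
   (int \<Rightarrow> 'b::euclidean_space set) \<Rightarrow> (int \<Rightarrow> 'b \<Rightarrow> 'b) \<Rightarrow>
   (int \<Rightarrow> 'b \<Rightarrow> 'a) \<Rightarrow> (int \<Rightarrow> 'a \<Rightarrow> 'b) \<Rightarrow> bool" where
  "deformation_retract C dC D dD Phi Psi \<longleftrightarrow>
     chain_cx C dC \<and> chain_cx D dD \<and>
     chain_map D dD C dC Phi \<and> chain_map C dC D dD Psi \<and>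
     (\<forall>m. \<forall>x\<in>D m. Psi m (Phi m x) = x) \<and>
     (\<exists>h. (\<forall>m. linear (h m) \<and> h m ` C m \<subseteq> C (m + 1)) \<and>
          (\<forall>m. \<forall>x\<in>C m. Phi m (Psi m x) - x = dC (m + 1) (h m x) + h (m - 1) (dC m x)))"

definition adjoint_on :: "'a::euclidean_space set \<Rightarrow> 'b::euclidean_space set \<Rightarrow> ('a \<Rightarrow> 'b) \<Rightarrow> 'b \<Rightarrow> 'a" where
  "adjoint_on A B f y = (SOME x. x \<in> A \<and> (\<forall>u\<in>A. f u \<bullet> y = u \<bullet> x))"

definition Proj :: "'a::euclidean_space set \<Rightarrow> 'a \<Rightarrow> 'a" where
  "Proj W x = closest_point W x"

definition ker_Psi :: "(int \<Rightarrow> 'a::euclidean_space set) \<Rightarrow> (int \<Rightarrow> 'a \<Rightarrow> 'b::euclidean_space) \<Rightarrow> int \<Rightarrow> 'a set" where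
  "ker_Psi C Psi m = {x \<in> C m. Psi m x = 0}"

text \<open>The span of R_+(\<partial>'_n) in the Morsification: Im \<partial>'_n^dagger, where
\<partial>'_n : Ker \<Psi>_n \<rightarrow> Ker \<Psi>_(n-1) with restricted inner products.\<close>
definition Rplus_span :: "(int \<Rightarrow> 'a::euclidean_space set) \<Rightarrow> (int \<Rightarrow> 'a \<Rightarrow> 'a) \<Rightarrow> (int \<Rightarrow> 'a \<Rightarrow> 'b::euclidean_space) \<Rightarrow> int \<Rightarrow> 'a set" where
  "Rplus_span C dC Psi n =
     adjoint_on (ker_Psi C Psi n) (ker_Psi C Psi (n - 1)) (dC n) ` ker_Psi C Psi (n - 1)"

text \<open>The Morsification is (n,n-1)-free iff R_+(\<partial>'_n) is empty, i.e. the
orthonormal basis of Im \<partial>'_n^dagger is empty, i.e. this image is the zero space.\<close>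
definition morsification_free :: "(int \<Rightarrow> 'a::euclidean_space set) \<Rightarrow> (int \<Rightarrow> 'a \<Rightarrow> 'a) \<Rightarrow> (int \<Rightarrow> 'a \<Rightarrow> 'b::euclidean_space) \<Rightarrow> int \<Rightarrow> bool" where
  "morsification_free C dC Psi n \<longleftrightarrow> Rplus_span C dC Psi n \<subseteq> {0}"

end

theory Submission
  imports Defs
begin

text \<open>Everything reduces to the condition that \<open>\<partial>\<^sub>n\<close> vanishes on \<open>Ker \<Psi>\<^sub>n\<close>.
The Morsification is \<open>(n,n-1)\<close>-free exactly when this holds, since \<open>\<partial>'\<^sub>n\<close> and its
adjoint vanish together. The subcomplex \<open>Ker \<Psi>\<close> is acyclic, because the homotopy
\<open>\<Phi>\<Psi> \<simeq> id\<close> contracts it; so the condition says that \<open>Ker \<Psi>\<^sub>n\<close> consists of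
boundaries. Condition (1) says that \<open>\<Phi>\<Psi>s - s\<close>, which spans \<open>Ker \<Psi>\<^sub>n\<close>, lies in
\<open>(Ker \<partial>\<^sub>n\<^sub>+\<^sub>1\<^sup>\<dagger>)\<^sup>\<bottom> = Im \<partial>\<^sub>n\<^sub>+\<^sub>1\<close>, which is the same thing.
Condition (2) is a consequence: if \<open>Ker \<Psi>\<^sub>n\<close> consists of boundaries then \<open>Ker \<Psi>\<^sub>n\<^sub>-\<^sub>1\<close>
contains no nonzero cycles, so \<open>\<Phi>\<Psi>\<close> fixes every cycle \<open>z\<close> of degree \<open>n-1\<close>, and
\<open>\<langle>\<Psi>\<^sup>\<dagger>\<Phi>\<^sup>\<dagger>s - s, z\<rangle> = \<langle>s, \<Phi>\<Psi>z - z\<rangle> = 0\<close>.\<close>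

lemma adjoint_on_exists:
  fixes f :: "'a::euclidean_space \<Rightarrow> 'b::euclidean_space"
  assumes "subspace A" "linear f"
  shows "\<exists>x\<in>A. \<forall>u\<in>A. f u \<bullet> y = u \<bullet> x"
proof -
  obtain p q where p: "p \<in> span A" and q: "\<And>w. w \<in> span A \<Longrightarrow> orthogonal q w"
    and adjoint_eq: "adjoint f y = p + q"
    using orthogonal_subspace_decomp_exists[of A "adjoint f y"] by blast
  show ?thesis
  proof (intro bexI ballI)
    show "p \<in> A" using p assms(1) by (metis span_eq_iff)
    fix u assume "u \<in> A"
    then have "u \<bullet> q = 0" using q[of u] by (simp add: span_base orthogonal_def inner_commute)
    then show "f u \<bullet> y = u \<bullet> p"
      using adjoint_works[OF assms(2), of u y] adjoint_eq by (simp add: inner_add_right)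
  qed
qed

lemma
  fixes f :: "'a::euclidean_space \<Rightarrow> 'b::euclidean_space"
  assumes "subspace A" "linear f"
  shows adjoint_on_in: "adjoint_on A B f y \<in> A"
    and inner_adjoint_on: "u \<in> A \<Longrightarrow> f u \<bullet> y = u \<bullet> adjoint_on A B f y"
proof -
  have "adjoint_on A B f y \<in> A \<and> (\<forall>u\<in>A. f u \<bullet> y = u \<bullet> adjoint_on A B f y)"
    unfolding adjoint_on_def by (rule someI_ex) (use adjoint_on_exists[OF assms] in blast)
  then show "adjoint_on A B f y \<in> A" "u \<in> A \<Longrightarrow> f u \<bullet> y = u \<bullet> adjoint_on A B f y"
    by auto
qed

lemma adjoint_on_eq_0_iff:
  fixes f :: "'a::euclidean_space \<Rightarrow> 'b::euclidean_space"
  assumes "subspace A" "linear f"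
  shows "adjoint_on A B f y = 0 \<longleftrightarrow> (\<forall>u\<in>A. f u \<bullet> y = 0)"
proof
  assume "\<forall>u\<in>A. f u \<bullet> y = 0"
  then have "adjoint_on A B f y \<bullet> adjoint_on A B f y = 0"
    using adjoint_on_in[OF assms] inner_adjoint_on[OF assms] by metis
  then show "adjoint_on A B f y = 0" by simp
next
  assume "adjoint_on A B f y = 0"
  then show "\<forall>u\<in>A. f u \<bullet> y = 0" using inner_adjoint_on[OF assms, where B=B and y=y] by simp
qed

lemma inner_adjoint_on_adjoint_on:
  fixes f :: "'b::euclidean_space \<Rightarrow> 'a::euclidean_space" and g :: "'a \<Rightarrow> 'b"
  assumes "subspace A" "subspace B" "linear f" "linear g" "z \<in> A" "g z \<in> B"
  shows "adjoint_on A B g (adjoint_on B A f s) \<bullet> z = f (g z) \<bullet> s"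
  using inner_adjoint_on[OF assms(1,4,5)] inner_adjoint_on[OF assms(2,3,6)]
  by (simp add: inner_commute)

lemma Proj_eq_0_iff:
  fixes W :: "'a::euclidean_space set"
  assumes "subspace W"
  shows "Proj W v = 0 \<longleftrightarrow> (\<forall>w\<in>W. v \<bullet> w = 0)"
proof
  have W: "convex W" "closed W" using assms by (auto simp: subspace_imp_convex closed_subspace)
  assume Proj_0: "Proj W v = 0"
  show "\<forall>w\<in>W. v \<bullet> w = 0"
  proof
    fix w assume w: "w \<in> W"
    then have "- w \<in> W" using assms by (simp add: subspace_neg)
    then have "v \<bullet> w \<le> 0" "v \<bullet> (- w) \<le> 0"
      using closest_point_dot[OF W w, of v] closest_point_dot[OF W \<open>- w \<in> W\<close>, of v] Proj_0
      by (auto simp: Proj_def)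
    then show "v \<bullet> w = 0" by simp
  qed
next
  have W: "convex W" "closed W" using assms by (auto simp: subspace_imp_convex closed_subspace)
  assume orth: "\<forall>w\<in>W. v \<bullet> w = 0"
  have "dist v 0 \<le> dist v z" if "z \<in> W" for z
  proof -
    have "v \<bullet> z = 0" using orth that by blast
    then have "norm (v - z)^2 = norm v^2 + norm z^2"
      by (simp add: power2_norm_eq_inner inner_diff_left inner_diff_right inner_commute[of z v])
    then show ?thesis by (simp add: dist_norm power2_le_imp_le)
  qed
  then show "Proj W v = 0"
    using closest_point_unique[OF W subspace_0[OF assms]] by (simp add: Proj_def)
qed

lemma Proj_ker_adjoint_on_eq_0_iff:
  fixes f :: "'a::euclidean_space \<Rightarrow> 'a"
  assumes "subspace A" "subspace V" "linear f" "f ` A \<subseteq> V" "x \<in> V"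
  shows "Proj {w \<in> V. adjoint_on A V f w = 0} x = 0 \<longleftrightarrow> x \<in> f ` A"
proof -
  define W where "W = {w \<in> V. \<forall>a\<in>A. f a \<bullet> w = 0}"
  have ker_eq: "{w \<in> V. adjoint_on A V f w = 0} = W"
    unfolding W_def using adjoint_on_eq_0_iff[OF assms(1,3)] by blast
  have "subspace W"
    using assms(2) by (auto simp: W_def subspace_def inner_add_right)
  moreover have "x \<in> f ` A" if orth: "\<forall>w\<in>W. x \<bullet> w = 0"
  proof -
    have image: "subspace (f ` A)" using linear_subspace_image[OF assms(3,1)] .
    obtain b c where b: "b \<in> span (f ` A)" and c: "\<And>w. w \<in> span (f ` A) \<Longrightarrow> orthogonal c w"
      and x_eq: "x = b + c"
      using orthogonal_subspace_decomp_exists[of "f ` A" x] by blast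
    have "b \<in> f ` A" using b image by (metis span_eq_iff)
    then have "c \<in> V" using x_eq assms(4,5) subspace_diff[OF assms(2)]
      by (metis add_diff_cancel_left' subsetD)
    moreover have "f a \<bullet> c = 0" if "a \<in> A" for a
      using c[of "f a"] that by (simp add: span_base orthogonal_def inner_commute)
    ultimately have "x \<bullet> c = 0" using orth by (simp add: W_def)
    moreover have "b \<bullet> c = 0" using c[OF b] by (simp add: orthogonal_def inner_commute)
    ultimately have "c = 0" using x_eq by (simp add: inner_add_left)
    with \<open>b \<in> f ` A\<close> x_eq show ?thesis by simp
  qed
  ultimately show ?thesis
    unfolding ker_eq by (auto simp: Proj_eq_0_iff W_def)
qed

locale chain_deformation_retract =
  fixes C :: "int \<Rightarrow> 'a::euclidean_space set" and dC :: "int \<Rightarrow> 'a \<Rightarrow> 'a"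
    and D :: "int \<Rightarrow> 'b::euclidean_space set" and dD :: "int \<Rightarrow> 'b \<Rightarrow> 'b"
    and Phi :: "int \<Rightarrow> 'b \<Rightarrow> 'a" and Psi :: "int \<Rightarrow> 'a \<Rightarrow> 'b"
  assumes retract: "deformation_retract C dC D dD Phi Psi"
begin

lemma subspace_C: "subspace (C m)"
  and subspace_D: "subspace (D m)"
  and linear_dC: "linear (dC m)"
  and linear_dD: "linear (dD m)"
  and dC_in: "x \<in> C m \<Longrightarrow> dC m x \<in> C (m - 1)"
  and dC_dC: "x \<in> C m \<Longrightarrow> dC (m - 1) (dC m x) = 0"
  and linear_Phi: "linear (Phi m)"
  and Phi_in: "y \<in> D m \<Longrightarrow> Phi m y \<in> C m"
  and dC_Phi: "y \<in> D m \<Longrightarrow> dC m (Phi m y) = Phi (m - 1) (dD m y)"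
  and linear_Psi: "linear (Psi m)"
  and Psi_in: "x \<in> C m \<Longrightarrow> Psi m x \<in> D m"
  and Psi_dC: "x \<in> C m \<Longrightarrow> Psi (m - 1) (dC m x) = dD m (Psi m x)"
  and Psi_Phi: "y \<in> D m \<Longrightarrow> Psi m (Phi m y) = y"
  using retract
  unfolding deformation_retract_def chain_cx_def chain_map_def image_subset_iff by metis+

lemma homotopy_exists:
  obtains h where "\<And>m. linear (h m)" "\<And>m x. x \<in> C m \<Longrightarrow> h m x \<in> C (m + 1)"
    "\<And>m x. x \<in> C m \<Longrightarrow> Phi m (Psi m x) - x = dC (m + 1) (h m x) + h (m - 1) (dC m x)"
  using retract unfolding deformation_retract_def image_subset_iff by metis

lemma mem_ker_Psi_iff: "x \<in> ker_Psi C Psi m \<longleftrightarrow> x \<in> C m \<and> Psi m x = 0"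
  by (simp add: ker_Psi_def)

lemma subspace_ker_Psi: "subspace (ker_Psi C Psi m)"
proof -
  have "ker_Psi C Psi m = C m \<inter> {x. Psi m x = 0}" by (auto simp: ker_Psi_def)
  then show ?thesis
    using subspace_C linear_Psi
    by (simp add: subspace_inter linear_subspace_kernel)
qed

lemma dC_ker_Psi: "u \<in> ker_Psi C Psi m \<Longrightarrow> dC m u \<in> ker_Psi C Psi (m - 1)"
  by (simp add: mem_ker_Psi_iff dC_in Psi_dC linear_0[OF linear_dD])

lemma diff_Phi_Psi_in_ker_Psi: "x \<in> C m \<Longrightarrow> x - Phi m (Psi m x) \<in> ker_Psi C Psi m"
  by (simp add: mem_ker_Psi_iff subspace_diff[OF subspace_C] Phi_in Psi_in Psi_Phi
      linear_diff[OF linear_Psi])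

lemma dC_Phi_Psi: "x \<in> C m \<Longrightarrow> dC m (Phi m (Psi m x)) = Phi (m - 1) (Psi (m - 1) (dC m x))"
  by (simp add: dC_Phi Psi_in Psi_dC)

lemma Phi_Psi_ker_Psi: "x \<in> ker_Psi C Psi m \<Longrightarrow> Phi m (Psi m x) = 0"
  by (simp add: mem_ker_Psi_iff linear_0[OF linear_Phi])

text \<open>\<open>Ker \<Psi>\<close> is acyclic: on it \<open>\<Phi>\<Psi> = 0\<close>, so the homotopy exhibits every cycle \<open>k\<close>
as the boundary of \<open>-h k\<close>, which is then moved into \<open>Ker \<Psi>\<close> by subtracting its
\<open>\<Phi>\<Psi>\<close>-part.\<close>

lemma ker_Psi_cycle_is_boundary:
  assumes k: "k \<in> ker_Psi C Psi (m - 1)" and cycle: "dC (m - 1) k = 0"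
  shows "\<exists>g\<in>ker_Psi C Psi m. dC m g = k"
proof -
  obtain h where linear_h: "\<And>m. linear (h m)" and h_in: "\<And>m x. x \<in> C m \<Longrightarrow> h m x \<in> C (m + 1)"
    and homotopy: "\<And>m x. x \<in> C m \<Longrightarrow>
        Phi m (Psi m x) - x = dC (m + 1) (h m x) + h (m - 1) (dC m x)"
    using homotopy_exists by blast
  have kC: "k \<in> C (m - 1)" using k by (simp add: mem_ker_Psi_iff)
  define g where "g = - h (m - 1) k"
  have gC: "g \<in> C m"
    using h_in[OF kC] subspace_neg[OF subspace_C] by (simp add: g_def)
  have "- k = dC m (h (m - 1) k)"
    using homotopy[OF kC] Phi_Psi_ker_Psi[OF k] cycle by (simp add: linear_0[OF linear_h])
  then have dC_g: "dC m g = k"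
    by (simp add: g_def linear_neg[OF linear_dC]) (metis minus_minus)
  show ?thesis
  proof
    show "g - Phi m (Psi m g) \<in> ker_Psi C Psi m" using diff_Phi_Psi_in_ker_Psi[OF gC] .
    show "dC m (g - Phi m (Psi m g)) = k"
      using dC_Phi_Psi[OF gC] Phi_Psi_ker_Psi[OF k]
      by (simp add: dC_g linear_diff[OF linear_dC])
  qed
qed

lemma morsification_free_iff:
  "morsification_free C dC Psi n \<longleftrightarrow> (\<forall>u\<in>ker_Psi C Psi n. dC n u = 0)"
proof -
  have "morsification_free C dC Psi n \<longleftrightarrow>
      (\<forall>y\<in>ker_Psi C Psi (n - 1). \<forall>u\<in>ker_Psi C Psi n. dC n u \<bullet> y = 0)"
    unfolding morsification_free_def Rplus_span_def
    using adjoint_on_eq_0_iff[OF subspace_ker_Psi linear_dC] by blast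
  also have "\<dots> \<longleftrightarrow> (\<forall>u\<in>ker_Psi C Psi n. dC n u = 0)"
    using dC_ker_Psi by (metis inner_eq_zero_iff inner_zero_left)
  finally show ?thesis .
qed

lemma Phi_Psi_diff_boundary_iff:
  "(\<forall>x\<in>C n. Phi n (Psi n x) - x \<in> dC (n + 1) ` C (n + 1)) \<longleftrightarrow>
   (\<forall>u\<in>ker_Psi C Psi n. dC n u = 0)"
proof safe
  fix u assume boundary: "\<forall>x\<in>C n. Phi n (Psi n x) - x \<in> dC (n + 1) ` C (n + 1)"
    and u: "u \<in> ker_Psi C Psi n"
  then have "Phi n (Psi n u) - u \<in> dC (n + 1) ` C (n + 1)"
    unfolding mem_ker_Psi_iff by blast
  then have "- u \<in> dC (n + 1) ` C (n + 1)"
    using Phi_Psi_ker_Psi[OF u] by simp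
  then have "u \<in> dC (n + 1) ` C (n + 1)"
    using subspace_neg[OF linear_subspace_image[OF linear_dC subspace_C]] by (metis minus_minus)
  then show "dC n u = 0" using dC_dC by fastforce
next
  fix x assume no_cycles: "\<forall>u\<in>ker_Psi C Psi n. dC n u = 0" and x: "x \<in> C n"
  then obtain g where g: "g \<in> ker_Psi C Psi (n + 1)" "dC (n + 1) g = x - Phi n (Psi n x)"
    using ker_Psi_cycle_is_boundary[of "x - Phi n (Psi n x)" "n + 1"] diff_Phi_Psi_in_ker_Psi
    by auto
  show "Phi n (Psi n x) - x \<in> dC (n + 1) ` C (n + 1)"
  proof
    show "Phi n (Psi n x) - x = dC (n + 1) (- g)" using g(2) by (simp add: linear_neg[OF linear_dC])
    show "- g \<in> C (n + 1)" using g(1) subspace_neg[OF subspace_C] by (simp add: mem_ker_Psi_iff)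
  qed
qed

lemma Phi_Psi_fixes_cycles:
  assumes no_cycles: "\<forall>u\<in>ker_Psi C Psi n. dC n u = 0"
    and z: "z \<in> C (n - 1)" "dC (n - 1) z = 0"
  shows "Phi (n - 1) (Psi (n - 1) z) = z"
proof -
  define k where "k = z - Phi (n - 1) (Psi (n - 1) z)"
  have k: "k \<in> ker_Psi C Psi (n - 1)" using diff_Phi_Psi_in_ker_Psi[OF z(1)] by (simp add: k_def)
  have "dC (n - 1) k = 0"
    using dC_Phi_Psi[OF z(1)] z(2)
    by (simp add: k_def linear_diff[OF linear_dC] linear_0[OF linear_Psi] linear_0[OF linear_Phi])
  then obtain g where "g \<in> ker_Psi C Psi n" "dC n g = k"
    using ker_Psi_cycle_is_boundary[OF k] by blast
  then have "k = 0" using no_cycles by blast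
  then show ?thesis by (simp add: k_def)
qed

lemma Proj_cycles_adjoint_diff_eq_0:
  assumes no_cycles: "\<forall>u\<in>ker_Psi C Psi n. dC n u = 0" and s: "s \<in> C (n - 1)"
  shows "Proj {w \<in> C (n - 1). dC (n - 1) w = 0}
           (adjoint_on (C (n - 1)) (D (n - 1)) (Psi (n - 1))
              (adjoint_on (D (n - 1)) (C (n - 1)) (Phi (n - 1)) s) - s) = 0"
proof -
  have "{w \<in> C (n - 1). dC (n - 1) w = 0} = C (n - 1) \<inter> {w. dC (n - 1) w = 0}" by auto
  then have "subspace {w \<in> C (n - 1). dC (n - 1) w = 0}"
    by (simp add: subspace_inter subspace_C linear_subspace_kernel linear_dC)
  moreover have
    "adjoint_on (C (n - 1)) (D (n - 1)) (Psi (n - 1))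
       (adjoint_on (D (n - 1)) (C (n - 1)) (Phi (n - 1)) s) \<bullet> z = s \<bullet> z"
    if "z \<in> C (n - 1)" "dC (n - 1) z = 0" for z
    using inner_adjoint_on_adjoint_on[OF subspace_C subspace_D linear_Phi linear_Psi]
      Phi_Psi_fixes_cycles[OF no_cycles that] that Psi_in
    by (simp add: inner_commute)
  ultimately show ?thesis by (simp add: Proj_eq_0_iff inner_diff_left)
qed

end

theorem mainTheorem10:
  fixes C :: "int \<Rightarrow> 'a::euclidean_space set" and dC :: "int \<Rightarrow> 'a \<Rightarrow> 'a"
    and D :: "int \<Rightarrow> 'b::euclidean_space set" and dD :: "int \<Rightarrow> 'b \<Rightarrow> 'b"
    and Phi :: "int \<Rightarrow> 'b \<Rightarrow> 'a" and Psi :: "int \<Rightarrow> 'a \<Rightarrow> 'b" and n :: int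
  assumes "deformation_retract C dC D dD Phi Psi"
  shows "((\<forall>s\<in>C n.
            Proj {w \<in> C n. adjoint_on (C (n + 1)) (C n) (dC (n + 1)) w = 0}
                 (Phi n (Psi n s) - s) = 0) \<and>
          (\<forall>s\<in>C (n - 1).
            Proj {w \<in> C (n - 1). dC (n - 1) w = 0}
                 (adjoint_on (C (n - 1)) (D (n - 1)) (Psi (n - 1))
                    (adjoint_on (D (n - 1)) (C (n - 1)) (Phi (n - 1)) s) - s) = 0))
         \<longleftrightarrow> morsification_free C dC Psi n"
proof -
  interpret chain_deformation_retract C dC D dD Phi Psi
    using assms by unfold_locales
  have Proj_eq_0_iff_boundary: "Proj {w \<in> C n. adjoint_on (C (n + 1)) (C n) (dC (n + 1)) w = 0}
          (Phi n (Psi n s) - s) = 0 \<longleftrightarrow>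
        Phi n (Psi n s) - s \<in> dC (n + 1) ` C (n + 1)" if "s \<in> C n" for s
  proof (rule Proj_ker_adjoint_on_eq_0_iff[OF subspace_C subspace_C linear_dC])
    show "dC (n + 1) ` C (n + 1) \<subseteq> C n" using dC_in[of _ "n + 1"] by auto
    show "Phi n (Psi n s) - s \<in> C n"
      using that by (simp add: Phi_in Psi_in subspace_diff[OF subspace_C])
  qed
  then have "(\<forall>s\<in>C n.
      Proj {w \<in> C n. adjoint_on (C (n + 1)) (C n) (dC (n + 1)) w = 0}
        (Phi n (Psi n s) - s) = 0) \<longleftrightarrow> (\<forall>u\<in>ker_Psi C Psi n. dC n u = 0)"
    unfolding Phi_Psi_diff_boundary_iff[symmetric] by simp
  with Proj_cycles_adjoint_diff_eq_0 show ?thesis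
    unfolding morsification_free_iff by blast
qed

end
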